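(* For a word $w=w_1\cdots w_n$ over $\{1,2,3,4\}$ let $s(w)=|\{i : 1\le i\le n-2,\ w_{i+2}-w_i=2\}|$. Then $$\sum_{w\in\{1,2,3,4\}^*} q^{|w|}z^{s(w)}=\frac{1}{1-4q-8q^3(z-1)-4q^4(z-1)^2}.$$
   Context: The sum ranges over all finite words over $\{1,2,3,4\}$, including the empty word; $|w|$ denotes length. $s(w)$ counts occurrences of the place-difference-value pattern $(12,(\mathbb{P},\{2\},\mathbb{P}),\{(1,2,\{2\})\},(\mathbb{P},\mathbb{P}))$. *)

theory Defs
  imports "HOL-Computational_Algebra.Polynomial" "HOL-Computational_Algebra.Formal_Power_Series"
begin

definition words :: "nat \<Rightarrow> int list set" where
  "words n = {w. length w = n \<and> set w \<subseteq> {1..4}}"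

(* s(w) = #{i : 1 <= i <= n-2, w_{i+2} - w_i = 2}, using 0-based indices *)
definition s_stat :: "int list \<Rightarrow> nat" where
  "s_stat w = card {i. i + 2 < length w \<and> w ! (i + 2) - w ! i = 2}"

definition zvar :: "int poly" where "zvar = [:0, 1:]"

definition gen_fun :: "int poly fps" where
  "gen_fun = Abs_fps (\<lambda>n. \<Sum>w\<in>words n. zvar ^ s_stat w)"

end

theory Submission
  imports Defs
begin

text \<open>The statistic only compares letters two positions apart, so a word splits into the
chains of its odd- and of its even-indexed letters, and s(w) is the total number of steps +2
along the two chains. Hence the coefficient of q^n is b(\<lceil>n/2\<rceil>) b(\<lfloor>n/2\<rfloor>), where b(m) weights
the chains of length m by z^(number of steps +2). Exactly the two letter pairs (1,3) and (2,4)
are steps +2, which gives b(m+2) = 4 b(m+1) + 2(z-1) b(m); interleaved products of solutions of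
this recurrence satisfy the order-4 recurrence whose characteristic polynomial is the
denominator.\<close>

unbundle fps_syntax

lemma interleaved_product_recurrence:
  fixes u g :: "nat \<Rightarrow> 'a::comm_ring_1"
  assumes u_rec: "\<And>k. u (k + 2) = a * u (k + 1) + b * u k"
    and g_def: "\<And>n. g n = u ((n + 1) div 2) * u (n div 2)"
  shows "g (n + 4) = a * g (n + 3) + a * b * g (n + 1) + b\<^sup>2 * g n"
proof -
  define p r where "p = (n + 1) div 2" and "r = n div 2"
  have "(n + 4 + 1) div 2 = p + 2" "(n + 4) div 2 = r + 2" "(n + 3 + 1) div 2 = r + 2"
    "(n + 3) div 2 = p + 1" "(n + 1 + 1) div 2 = r + 1"
    unfolding p_def r_def by presburger+
  then have "g (n + 4) = u (p + 2) * u (r + 2)" "g (n + 3) = u (r + 2) * u (p + 1)"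
    "g (n + 1) = u (r + 1) * u p" "g n = u p * u r"
    by (simp_all add: g_def p_def r_def)
  with u_rec[of p] u_rec[of r] show ?thesis
    by (simp add: algebra_simps power2_eq_square)
qed

lemma fps_mult_char_poly_eq_1:
  fixes f :: "'a::comm_ring_1 fps"
  assumes "f $ 0 = 1" "f $ 1 = a * f $ 0" "f $ 2 = a * f $ 1" "f $ 3 = a * f $ 2 + b * f $ 0"
    and rec: "\<And>n. f $ (n + 4) = a * f $ (n + 3) + b * f $ (n + 1) + c * f $ n"
  shows "f * (1 - fps_const a * fps_X - fps_const b * fps_X ^ 3 - fps_const c * fps_X ^ 4) = 1"
proof -
  have "f * (1 - fps_const a * fps_X - fps_const b * fps_X ^ 3 - fps_const c * fps_X ^ 4)
      = f - fps_const a * (fps_X * f) - fps_const b * (fps_X ^ 3 * f) - fps_const c * (fps_X ^ 4 * f)"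
    by (simp add: algebra_simps)
  also have "\<dots> = 1"
  proof (rule fps_ext)
    fix n
    show "(f - fps_const a * (fps_X * f) - fps_const b * (fps_X ^ 3 * f)
        - fps_const c * (fps_X ^ 4 * f)) $ n = 1 $ n"
    proof (cases "n < 4")
      case True
      then have "n = 0 \<or> n = 1 \<or> n = 2 \<or> n = 3" by auto
      then show ?thesis
        using assms(1-4) by (elim disjE) (simp_all add: fps_X_power_mult_nth)
    next
      case False
      then obtain m where "n = m + 4"
        by (metis add.commute le_Suc_ex not_less)
      then show ?thesis
        using rec[of m] by (simp add: fps_X_power_mult_nth add.commute)
    qed
  qed
  finally show ?thesis .
qed

lemma words_0: "words 0 = {[]}"
  by (auto simp: words_def)

lemma words_Suc: "words (Suc n) = (\<lambda>(c, w). c # w) ` ({1..4} \<times> words n)"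
  by (auto simp: words_def image_iff length_Suc_conv)

lemma sum_words_Suc:
  "(\<Sum>w\<in>words (Suc n). f w) = (\<Sum>c\<in>{1..4}. \<Sum>w\<in>words n. f (c # w))"
proof -
  have "inj_on (\<lambda>(c, w). c # w) ({1..4::int} \<times> words n)"
    by (auto simp: inj_on_def)
  then have "(\<Sum>w\<in>words (Suc n). f w) = (\<Sum>(c, w)\<in>{1..4} \<times> words n. f (c # w))"
    unfolding words_Suc by (subst sum.reindex) (auto simp: case_prod_beta)
  then show ?thesis
    by (simp add: sum.cartesian_product)
qed

lemma s_stat_eq_sum:
  "s_stat w = (\<Sum>i<length w - 2. if w ! (i + 2) - w ! i = 2 then 1 else 0)"
proof -
  have "{i. i + 2 < length w \<and> w ! (i + 2) - w ! i = 2}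
      = {i \<in> {..<length w - 2}. w ! (i + 2) - w ! i = 2}"
    by auto
  then show ?thesis
    by (simp add: s_stat_def sum.If_cases Int_def)
qed

lemma s_stat_short: "length w < 3 \<Longrightarrow> s_stat w = 0"
  by (simp add: s_stat_eq_sum)

lemma s_stat_Cons3:
  "s_stat (x # y # c # w) = (if c - x = 2 then 1 else 0) + s_stat (y # c # w)"
  by (simp add: s_stat_eq_sum sum.lessThan_Suc_shift del: sum.lessThan_Suc)

lemma atLeastAtMost_1_4: "{1..4::int} = {1, 2, 3, 4}"
  by auto

text \<open>chain_sum m x is the total weight of the chains x, c1, ..., cm with all ci in {1..4}, a
chain weighing z^(number of i with c(i+1) - c(i) = 2); chain_total m is b(m) of the header.\<close>

fun chain_sum :: "nat \<Rightarrow> int \<Rightarrow> int poly" where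
  "chain_sum 0 x = 1"
| "chain_sum (Suc m) x = (\<Sum>c\<in>{1..4}. (if c - x = 2 then zvar else 1) * chain_sum m c)"

fun chain_total :: "nat \<Rightarrow> int poly" where
  "chain_total 0 = 1"
| "chain_total (Suc m) = (\<Sum>x\<in>{1..4}. chain_sum m x)"

lemma zvar_power_s_stat_Cons3:
  "zvar ^ s_stat (x # y # c # w) = (if c - x = 2 then zvar else 1) * zvar ^ s_stat (y # c # w)"
  by (simp add: s_stat_Cons3 power_add)

lemma sum_words_Cons2_eq_chain_sums:
  "(\<Sum>w\<in>words n. zvar ^ s_stat (x # y # w)) = chain_sum ((n + 1) div 2) x * chain_sum (n div 2) y"
proof (induction n arbitrary: x y)
  case 0
  then show ?case
    by (simp add: words_0 s_stat_short)
next
  case (Suc n)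
  have "(\<Sum>w\<in>words (Suc n). zvar ^ s_stat (x # y # w))
      = (\<Sum>c\<in>{1..4}. (if c - x = 2 then zvar else 1) * (\<Sum>w\<in>words n. zvar ^ s_stat (y # c # w)))"
    by (simp add: sum_words_Suc zvar_power_s_stat_Cons3 sum_distrib_left)
  also have "\<dots> = chain_sum ((n + 1) div 2) y * chain_sum (Suc (n div 2)) x"
    by (simp add: Suc.IH sum_distrib_left ac_simps)
  finally show ?case
    by (simp add: ac_simps)
qed

lemma gen_fun_nth: "gen_fun $ n = chain_total ((n + 1) div 2) * chain_total (n div 2)"
proof (cases n)
  case 0
  then show ?thesis
    by (simp add: gen_fun_def words_0 s_stat_short)
next
  case (Suc k)
  show ?thesis
  proof (cases k)
    case 0
    with \<open>n = Suc k\<close> show ?thesis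
      by (simp add: gen_fun_def sum_words_Suc words_0 s_stat_short)
  next
    case (Suc m)
    with \<open>n = Suc k\<close> have "gen_fun $ n
        = (\<Sum>x\<in>{1..4}. \<Sum>y\<in>{1..4}. \<Sum>w\<in>words m. zvar ^ s_stat (x # y # w))"
      by (simp add: gen_fun_def sum_words_Suc)
    also have "\<dots> = chain_total (Suc ((m + 1) div 2)) * chain_total (Suc (m div 2))"
      by (simp add: sum_words_Cons2_eq_chain_sums sum_product)
    finally show ?thesis
      using Suc \<open>n = Suc k\<close> by simp
  qed
qed

lemma chain_total_rec:
  "chain_total (k + 2) = 4 * chain_total (k + 1) + 2 * (zvar - 1) * chain_total k"
  by (cases k) (simp_all add: atLeastAtMost_1_4 algebra_simps)

theorem mainTheorem7:
  shows "gen_fun * (1 - 4 * fps_X - 8 * fps_X ^ 3 * fps_const (zvar - 1)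
            - 4 * fps_X ^ 4 * fps_const ((zvar - 1) ^ 2)) = 1"
proof -
  have char_poly: "1 - 4 * fps_X - 8 * fps_X ^ 3 * fps_const (zvar - 1)
      - 4 * fps_X ^ 4 * fps_const ((zvar - 1) ^ 2)
    = 1 - fps_const 4 * fps_X - fps_const (8 * (zvar - 1)) * fps_X ^ 3
      - fps_const (4 * (zvar - 1) ^ 2) * fps_X ^ 4"
    by (simp only: numeral_fps_const mult_ac flip: fps_const_mult)
  have rec: "gen_fun $ (n + 4) = 4 * gen_fun $ (n + 3) + 8 * (zvar - 1) * gen_fun $ (n + 1)
      + 4 * (zvar - 1) ^ 2 * gen_fun $ n" for n
    using interleaved_product_recurrence[where g = "\<lambda>n. gen_fun $ n",
        OF chain_total_rec gen_fun_nth, of n]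
    by (simp add: power2_eq_square algebra_simps)
  have "chain_total 1 = 4" "chain_total 2 = 14 + 2 * zvar"
    by (simp_all add: numeral_2_eq_2 atLeastAtMost_1_4)
  then show ?thesis
    unfolding char_poly
    by (intro fps_mult_char_poly_eq_1 rec) (simp_all add: gen_fun_nth algebra_simps)
qed

end
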